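(* For every integer $r \geq 2$, \[n(r,3,3) = \begin{cases} r + r/2 & \text{if } r \text{ is even;}\\ r + \lceil r/2\rceil + 1 & \text{if } r \text{ is odd and } \lceil r/2\rceil \text{ is even;}\\ r + \lceil r/2\rceil + 2 & \text{if } r \text{ is odd and } \lceil r/2\rceil \text{ is odd.}\end{cases}\]
   Context: All graphs are finite and simple. For integers $r\geq 2$, $g\geq 3$, $\chi\geq 2$, an $(r,g,\chi)$-graph is an $r$-regular graph with girth (length of a shortest cycle) exactly $g$ and chromatic number exactly $\chi$. An $(r,g,\chi)$-cage is an $(r,g,\chi)$-graph of minimum order, and $n(r,g,\chi)$ denotes the order of an $(r,g,\chi)$-cage, i.e. the minimum number of vertices of an $(r,g,\chi)$-graph. *)

theory Defs
  imports Main
begin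

definition simple_graph :: "'a set \<Rightarrow> ('a \<Rightarrow> 'a \<Rightarrow> bool) \<Rightarrow> bool" where
  "simple_graph V E \<longleftrightarrow> finite V \<and>
     (\<forall>x y. E x y \<longrightarrow> x \<in> V \<and> y \<in> V) \<and>
     (\<forall>x y. E x y \<longrightarrow> E y x) \<and> (\<forall>x. \<not> E x x)"

definition regular :: "'a set \<Rightarrow> ('a \<Rightarrow> 'a \<Rightarrow> bool) \<Rightarrow> nat \<Rightarrow> bool" where
  "regular V E r \<longleftrightarrow> (\<forall>v\<in>V. card {u\<in>V. E v u} = r)"

definition has_cycle :: "'a set \<Rightarrow> ('a \<Rightarrow> 'a \<Rightarrow> bool) \<Rightarrow> nat \<Rightarrow> bool" where
  "has_cycle V E k \<longleftrightarrow> k \<ge> 3 \<and> (\<exists>c. inj_on c {0..<k} \<and> c ` {0..<k} \<subseteq> V \<and>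
     (\<forall>i<k. E (c i) (c (Suc i mod k))))"

definition girth_eq :: "'a set \<Rightarrow> ('a \<Rightarrow> 'a \<Rightarrow> bool) \<Rightarrow> nat \<Rightarrow> bool" where
  "girth_eq V E g \<longleftrightarrow> has_cycle V E g \<and> (\<forall>k<g. \<not> has_cycle V E k)"

definition colorable :: "'a set \<Rightarrow> ('a \<Rightarrow> 'a \<Rightarrow> bool) \<Rightarrow> nat \<Rightarrow> bool" where
  "colorable V E k \<longleftrightarrow> (\<exists>f. f ` V \<subseteq> {0..<k} \<and>
     (\<forall>x\<in>V. \<forall>y\<in>V. E x y \<longrightarrow> f x \<noteq> (f y :: nat)))"

definition chromatic_number :: "'a set \<Rightarrow> ('a \<Rightarrow> 'a \<Rightarrow> bool) \<Rightarrow> nat" where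
  "chromatic_number V E = (LEAST k. colorable V E k)"

text \<open>(r,g,chi)-graph; vertices taken from nat, which is no loss since every
  finite graph is isomorphic to one on a set of naturals.\<close>
definition rgchi_graph :: "nat set \<Rightarrow> (nat \<Rightarrow> nat \<Rightarrow> bool) \<Rightarrow> nat \<Rightarrow> nat \<Rightarrow> nat \<Rightarrow> bool" where
  "rgchi_graph V E r g chi \<longleftrightarrow> simple_graph V E \<and> regular V E r \<and> girth_eq V E g
     \<and> chromatic_number V E = chi"

definition cage_order :: "nat \<Rightarrow> nat \<Rightarrow> nat \<Rightarrow> nat" where
  "cage_order r g chi = (LEAST n. \<exists>V E. rgchi_graph V E r g chi \<and> card V = n)"

end

theory Submission
  imports Defs
begin

text \<open>In a proper 3-colouring of an \<open>r\<close>-regular graph on \<open>n\<close> vertices the \<open>r\<close> neighbours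
  of a vertex avoid its colour class, so every class has at most \<open>n - r\<close> vertices and
  \<open>3 r \<le> 2 n\<close>; for odd \<open>r\<close> the handshake lemma makes \<open>n\<close> even. In the remaining case
  \<open>2 n = 3 r + 1\<close> two classes have the maximal size \<open>n - r\<close>, so each of their vertices is
  adjacent to everything outside its class, and a vertex of the third class gets degree
  \<open>2 (n - r) = r + 1\<close>. The bound is attained by complete tripartite graphs with parts the
  residue classes mod 3, from which at most two matchings are removed.\<close>

lemma simple_graphD:
  assumes "simple_graph V E"
  shows "finite V" "E x y \<Longrightarrow> x \<in> V" "E x y \<Longrightarrow> y \<in> V" "E x y \<Longrightarrow> E y x" "\<not> E x x"
  using assms by (auto simp: simple_graph_def)

lemma colorable_card:
  assumes "simple_graph V E"
  shows "colorable V E (card V)"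
proof -
  have "finite V"
    using assms by (simp add: simple_graph_def)
  then obtain h where h: "bij_betw h V {0..<card V}"
    using ex_bij_betw_finite_nat by blast
  then have "h x \<noteq> h y" if "x \<in> V" "y \<in> V" "E x y" for x y
    using that assms unfolding bij_betw_def simple_graph_def by (metis inj_on_eq_iff)
  with h show ?thesis
    unfolding colorable_def bij_betw_def by blast
qed

lemma colorable_chromatic_number:
  assumes "simple_graph V E"
  shows "colorable V E (chromatic_number V E)"
  unfolding chromatic_number_def using colorable_card[OF assms] by (rule LeastI)

lemma triangle_not_colorable:
  assumes "E a b" "E b c" "E c a" "a \<in> V" "b \<in> V" "c \<in> V" "colorable V E k"
  shows "3 \<le> k"
proof -
  obtain f :: "'a \<Rightarrow> nat" where "f ` V \<subseteq> {0..<k}" and "\<forall>x\<in>V. \<forall>y\<in>V. E x y \<longrightarrow> f x \<noteq> f y"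
    using assms(7) unfolding colorable_def by blast
  with assms have "card {f a, f b, f c} = 3" and "{f a, f b, f c} \<subseteq> {0..<k}"
    by (metis card_3_iff, blast)
  then show ?thesis
    by (metis card_atLeastLessThan card_mono diff_zero finite_atLeastLessThan)
qed

lemma has_cycle_3I:
  assumes "simple_graph V E" "E a b" "E b c" "E c a"
  shows "has_cycle V E 3"
proof -
  have three: "{0..<3} = {0, 1, 2::nat}"
    by auto
  have "distinct [a, b, c]"
    using assms simple_graphD(5)[OF assms(1)] by auto
  then have "inj_on ((!) [a, b, c]) {0..<3}"
    by (intro inj_on_nth) auto
  moreover have "(!) [a, b, c] ` {0..<3} \<subseteq> V"
    using assms simple_graphD(2)[OF assms(1)] by (auto simp: three)
  moreover have "\<forall>i<3. E ([a, b, c] ! i) ([a, b, c] ! (Suc i mod 3))"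
  proof (intro allI impI)
    fix i :: nat
    assume "i < 3"
    then consider "i = 0" | "i = 1" | "i = 2"
      by linarith
    then show "E ([a, b, c] ! i) ([a, b, c] ! (Suc i mod 3))"
      by cases (simp_all add: assms)
  qed
  ultimately show ?thesis
    unfolding has_cycle_def by blast
qed

lemma girth_eq_3_iff: "girth_eq V E 3 \<longleftrightarrow> has_cycle V E 3"
  by (auto simp: girth_eq_def has_cycle_def)

lemma rgchi_graph_33I:
  assumes "simple_graph V E" "regular V E r" "colorable V E 3"
    and "E a b" "E b c" "E c a"
  shows "rgchi_graph V E r 3 3"
proof -
  have "a \<in> V" "b \<in> V" "c \<in> V"
    using simple_graphD(2)[OF assms(1)] assms(4-6) by blast+
  have "chromatic_number V E = 3"
    unfolding chromatic_number_def
  proof (rule Least_equality)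
    show "3 \<le> k" if "colorable V E k" for k
      using triangle_not_colorable[OF assms(4-6) \<open>a \<in> V\<close> \<open>b \<in> V\<close> \<open>c \<in> V\<close> that] .
  qed (rule assms(3))
  moreover have "girth_eq V E 3"
    using has_cycle_3I[OF assms(1,4-6)] by (simp add: girth_eq_3_iff)
  ultimately show ?thesis
    using assms(1,2) by (simp add: rgchi_graph_def)
qed

lemma even_card_regular:
  fixes V :: "'a::linorder set"
  assumes "simple_graph V E" "regular V E r"
  shows "even (r * card V)"
proof -
  define S where "S = (SIGMA v:V. {u\<in>V. E v u})"
  define S_lt where "S_lt = {p\<in>S. fst p < snd p}"
  have "finite S"
    using assms(1) by (simp add: S_def simple_graph_def)
  have "card S = r * card V"
    using assms by (simp add: S_def simple_graph_def regular_def)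
  moreover have "S = S_lt \<union> prod.swap ` S_lt" and "S_lt \<inter> prod.swap ` S_lt = {}"
    using assms(1) unfolding S_def S_lt_def simple_graph_def by (auto, metis neqE)
  ultimately have "card S = card S_lt + card (prod.swap ` S_lt)"
    using \<open>finite S\<close> by (metis card_Un_disjoint finite_Un)
  then show ?thesis
    using \<open>card S = r * card V\<close> by (simp add: card_image)
qed

lemma regular_less_card:
  assumes "simple_graph V E" "regular V E r" "v \<in> V"
  shows "r < card V"
proof -
  have "{u\<in>V. E v u} \<subseteq> V - {v}" and "finite V"
    using assms(1) by (auto simp: simple_graph_def)
  then have "card {u\<in>V. E v u} < card V"
    using assms(3) by (meson card_mono card_Diff1_less finite_Diff le_less_trans)
  with assms(2,3) show ?thesis
    by (simp add: regular_def)
qed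

lemma neighbours_subset_other_colours:
  assumes "\<forall>x\<in>V. \<forall>y\<in>V. E x y \<longrightarrow> f x \<noteq> f y" "v \<in> V"
  shows "{u\<in>V. E v u} \<subseteq> V - {u\<in>V. f u = f v}"
  using assms by fastforce

lemma card_colour_class_le:
  assumes "finite V" "regular V E r" "\<forall>x\<in>V. \<forall>y\<in>V. E x y \<longrightarrow> f x \<noteq> f y"
  shows "card {u\<in>V. f u = c} \<le> card V - r"
proof (cases "\<exists>v\<in>V. f v = c")
  case True
  then obtain v where v: "v \<in> V" "f v = c" by blast
  have "r = card {u\<in>V. E v u}"
    using assms(2) v(1) by (simp add: regular_def)
  also have "\<dots> \<le> card (V - {u\<in>V. f u = c})"
    using neighbours_subset_other_colours[OF assms(3) v(1)] v(2) assms(1) by (simp add: card_mono)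
  also have "\<dots> = card V - card {u\<in>V. f u = c}"
    using assms(1) by (intro card_Diff_subset) auto
  finally show ?thesis
    using assms(1) card_mono[of V "{u\<in>V. f u = c}"] by auto
next
  case False
  then have "{u\<in>V. f u = c} = {}"
    by blast
  then show ?thesis
    by (metis card.empty le0)
qed

lemma full_colour_class_adjacent:
  assumes "finite V" "regular V E r" "\<forall>x\<in>V. \<forall>y\<in>V. E x y \<longrightarrow> f x \<noteq> f y"
    and "card {u\<in>V. f u = f x} = card V - r" "x \<in> V" "y \<in> V" "f y \<noteq> f x"
  shows "E x y"
proof -
  let ?C = "{u\<in>V. f u = f x}"
  have "card ?C \<ge> 1"
    using assms(1,5) by (auto simp: Suc_le_eq card_gt_0_iff)
  then have "card (V - ?C) = r"
    using assms(1,4) by (subst card_Diff_subset) auto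
  moreover have "card {u\<in>V. E x u} = r"
    using assms(2,5) by (simp add: regular_def)
  ultimately have "{u\<in>V. E x u} = V - ?C"
    using neighbours_subset_other_colours[OF assms(3,5)] assms(1) by (intro card_subset_eq) auto
  then show ?thesis
    using assms(6,7) by auto
qed

lemma card_eq_sum_colour_classes:
  fixes f :: "'a \<Rightarrow> nat"
  assumes "finite V" "f ` V \<subseteq> {0..<k}"
  shows "card V = (\<Sum>i<k. card {u\<in>V. f u = i})"
proof -
  have "card V = card (\<Union>i<k. {u\<in>V. f u = i})"
    using assms(2) by (intro arg_cong[where f = card]) auto
  also have "\<dots> = (\<Sum>i<k. card {u\<in>V. f u = i})"
    using assms(1) by (intro card_UN_disjoint) auto
  finally show ?thesis .
qed

lemma regular_3_colorable_card_ge: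
  assumes "simple_graph V E" "regular V E r" "colorable V E 3" "V \<noteq> {}"
  shows "3 * r \<le> 2 * card V"
proof -
  obtain f :: "'a \<Rightarrow> nat" where f: "f ` V \<subseteq> {0..<3}" "\<forall>x\<in>V. \<forall>y\<in>V. E x y \<longrightarrow> f x \<noteq> f y"
    using assms(3) unfolding colorable_def by blast
  have "finite V"
    using simple_graphD(1)[OF assms(1)] .
  then have sum: "card V = card {u\<in>V. f u = 0} + card {u\<in>V. f u = 1} + card {u\<in>V. f u = 2}"
    using card_eq_sum_colour_classes[OF _ f(1)] by (simp add: eval_nat_numeral add.assoc)
  obtain v where "v \<in> V"
    using assms(4) by blast
  then have "r < card V"
    using regular_less_card[OF assms(1,2)] by blast
  then have class_bound: "card {u\<in>V. f u = i} + r \<le> card V" for i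
    using card_colour_class_le[OF \<open>finite V\<close> assms(2) f(2)] by (simp add: le_diff_conv2)
  show ?thesis
    using sum class_bound[of 0] class_bound[of 1] class_bound[of 2] by linarith
qed

lemma deficit_one_among_three:
  fixes a :: "nat \<Rightarrow> nat"
  assumes "a 0 \<le> s" "a 1 \<le> s" "a 2 \<le> s" "a 0 + a 1 + a 2 + 1 = 3 * s"
  shows "\<exists>k\<in>{0, 1, 2}. a k + 1 = s \<and> (\<forall>j\<in>{0, 1, 2} - {k}. a j = s)"
proof -
  have "a 0 + 1 = s \<and> a 1 = s \<and> a 2 = s \<or> a 1 + 1 = s \<and> a 0 = s \<and> a 2 = s \<or>
      a 2 + 1 = s \<and> a 0 = s \<and> a 1 = s"
    using assms by arith
  then show ?thesis
    by auto
qed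

lemma card_outside_colour_class_le:
  assumes "simple_graph V E" "regular V E r" "\<forall>x\<in>V. \<forall>y\<in>V. E x y \<longrightarrow> f x \<noteq> f y" "z \<in> V"
    and full: "\<And>y. y \<in> V \<Longrightarrow> f y \<noteq> f z \<Longrightarrow> card {u\<in>V. f u = f y} = card V - r"
  shows "card (V - {u\<in>V. f u = f z}) \<le> r"
proof -
  have "finite V"
    using simple_graphD(1)[OF assms(1)] .
  have "V - {u\<in>V. f u = f z} \<subseteq> {u\<in>V. E z u}"
  proof
    fix y
    assume y: "y \<in> V - {u\<in>V. f u = f z}"
    then have "E y z"
      using full assms(4) by (intro full_colour_class_adjacent[OF \<open>finite V\<close> assms(2,3)]) auto
    then show "y \<in> {u\<in>V. E z u}"
      using simple_graphD(4)[OF assms(1)] y by auto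
  qed
  then have "card (V - {u\<in>V. f u = f z}) \<le> card {u\<in>V. E z u}"
    using \<open>finite V\<close> by (intro card_mono) auto
  also have "\<dots> = r"
    using assms(2,4) by (simp add: regular_def)
  finally show ?thesis .
qed

lemma regular_3_colorable_card_ne:
  assumes "simple_graph V E" "regular V E r" "colorable V E 3" "2 \<le> r"
  shows "2 * card V \<noteq> 3 * r + 1"
proof
  assume card_V: "2 * card V = 3 * r + 1"
  obtain f :: "'a \<Rightarrow> nat" where f: "f ` V \<subseteq> {0..<3}" "\<forall>x\<in>V. \<forall>y\<in>V. E x y \<longrightarrow> f x \<noteq> f y"
    using assms(3) unfolding colorable_def by blast
  have "finite V"
    using simple_graphD(1)[OF assms(1)] .
  define s where "s = card V - r"
  define a where "a i = card {u\<in>V. f u = i}" for i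
  have "a i \<le> s" for i
    using card_colour_class_le[OF \<open>finite V\<close> assms(2) f(2)] by (simp add: a_def s_def)
  moreover have "a 0 + a 1 + a 2 + 1 = 3 * s"
    using card_eq_sum_colour_classes[OF \<open>finite V\<close> f(1)] card_V
    by (simp add: a_def s_def eval_nat_numeral add.assoc)
  ultimately obtain k where k: "a k + 1 = s" and full: "\<forall>j\<in>{0, 1, 2} - {k}. a j = s"
    using deficit_one_among_three by meson
  have "a k \<noteq> 0"
    using k card_V assms(4) by (simp add: s_def)
  then obtain z where z: "z \<in> V" "f z = k"
    unfolding a_def by (metis (mono_tags, lifting) card.empty empty_Collect_eq)
  have "f y \<in> {0, 1, 2}" if "y \<in> V" for y
    using f(1) that by auto
  then have "card (V - {u\<in>V. f u = f z}) \<le> r"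
    using full z by (intro card_outside_colour_class_le[OF assms(1,2) f(2) z(1)]) (auto simp: a_def s_def)
  moreover have "card (V - {u\<in>V. f u = f z}) = r + 1"
    using \<open>finite V\<close> k card_V z(2) by (subst card_Diff_subset) (auto simp: a_def s_def)
  ultimately show False
    by simp
qed

definition cage_bound_33 :: "nat \<Rightarrow> nat" where
  "cage_bound_33 r =
    (if even r then r + r div 2
     else if even ((r + 1) div 2) then r + (r + 1) div 2 + 1
     else r + (r + 1) div 2 + 2)"

lemma cage_bound_33_le:
  fixes n r :: nat
  assumes "3 * r \<le> 2 * n" "odd r \<Longrightarrow> even n" "2 * n \<noteq> 3 * r + 1"
  shows "cage_bound_33 r \<le> n"
proof (cases "even r")
  case True
  then obtain m where "r = 2 * m"
    by blast
  then show ?thesis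
    using assms(1) by (simp add: cage_bound_33_def)
next
  case False
  then obtain k where n: "n = 2 * k"
    using assms(2) by blast
  from False obtain m where r: "r = 2 * m + 1"
    using oddE by blast
  show ?thesis
  proof (cases "even m")
    case True
    then obtain t where "m = 2 * t"
      by blast
    moreover have "3 * t + 1 \<le> k"
      using assms(1) \<open>m = 2 * t\<close> unfolding n r by simp
    moreover have "3 * t + 1 \<noteq> k"
      using assms(3) \<open>m = 2 * t\<close> unfolding n r by auto
    ultimately have "3 * t + 2 \<le> k"
      by simp
    then show ?thesis
      using \<open>m = 2 * t\<close> unfolding cage_bound_33_def n r by simp
  next
    case False
    then obtain t where "m = 2 * t + 1"
      using oddE by blast
    then have "3 * t + 3 \<le> k"
      using assms(1) unfolding n r by simp
    then show ?thesis
      using \<open>m = 2 * t + 1\<close> unfolding cage_bound_33_def n r by simp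
  qed
qed

lemma rgchi_graph_33_card_ge:
  assumes "rgchi_graph V E r 3 3" "2 \<le> r"
  shows "cage_bound_33 r \<le> card V"
proof (rule cage_bound_33_le)
  have G: "simple_graph V E" "regular V E r" "has_cycle V E 3" "chromatic_number V E = 3"
    using assms(1) by (auto simp: rgchi_graph_def girth_eq_3_iff)
  then have "colorable V E 3"
    using colorable_chromatic_number by metis
  moreover have "V \<noteq> {}"
    using G(3) by (auto simp: has_cycle_def)
  ultimately show "3 * r \<le> 2 * card V" "2 * card V \<noteq> 3 * r + 1"
    using G(1,2) assms(2) regular_3_colorable_card_ge regular_3_colorable_card_ne by blast+
  show "even (card V)" if "odd r"
    using even_card_regular[OF G(1,2)] that by simp
qed

lemma card_residue_class:
  fixes n d i :: nat
  assumes "i < d"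
  shows "card {u. u < n \<and> u mod d = i} = (n + d - 1 - i) div d"
proof -
  let ?M = "(n + d - 1 - i) div d"
  have below: "j < ?M \<longleftrightarrow> d * j + i < n" for j
  proof -
    have "j < ?M \<longleftrightarrow> Suc j * d \<le> n + d - 1 - i"
      using assms by (simp add: Suc_le_eq[symmetric] less_eq_div_iff_mult_less_eq)
    also have "\<dots> \<longleftrightarrow> d * j + i < n"
      using assms by (simp add: algebra_simps) arith
    finally show ?thesis .
  qed
  have "{u. u < n \<and> u mod d = i} = (\<lambda>j. d * j + i) ` {..<?M}"
  proof (intro set_eqI iffI)
    fix u
    assume u: "u \<in> {u. u < n \<and> u mod d = i}"
    then have "u = d * (u div d) + i"
      using mult_div_mod_eq[of d u] by simp
    with u below show "u \<in> (\<lambda>j. d * j + i) ` {..<?M}"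
      by (intro image_eqI[of _ _ "u div d"]) auto
  next
    fix u
    assume "u \<in> (\<lambda>j. d * j + i) ` {..<?M}"
    then obtain j where "j < ?M" "u = d * j + i"
      by blast
    then show "u \<in> {u. u < n \<and> u mod d = i}"
      using assms below[of j] by simp
  qed
  moreover have "inj_on (\<lambda>j. d * j + i) {..<?M}"
    using assms by (intro inj_onI) auto
  ultimately show ?thesis
    by (simp add: card_image)
qed

text \<open>An involution \<open>p\<close> of \<open>{0..<n}\<close> encodes a matching of the complete tripartite graph with
  parts the residue classes mod 3: \<open>x\<close> is matched with \<open>p x\<close>, and fixed points are unmatched.\<close>
definition tripartite_matching :: "nat \<Rightarrow> (nat \<Rightarrow> nat) \<Rightarrow> bool" where
  "tripartite_matching n p \<longleftrightarrow>
     (\<forall>x<n. p x < n \<and> p (p x) = x \<and> (p x = x \<or> p x mod 3 \<noteq> x mod 3))"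

definition tripartite_minus :: "nat \<Rightarrow> (nat \<Rightarrow> nat) \<Rightarrow> (nat \<Rightarrow> nat) \<Rightarrow> nat \<Rightarrow> nat \<Rightarrow> bool" where
  "tripartite_minus n p q x y \<longleftrightarrow> x < n \<and> y < n \<and> x mod 3 \<noteq> y mod 3 \<and> y \<noteq> p x \<and> y \<noteq> q x"

lemma simple_graph_tripartite_minus:
  assumes "tripartite_matching n p" "tripartite_matching n q"
  shows "simple_graph {0..<n} (tripartite_minus n p q)"
  unfolding simple_graph_def
proof (intro conjI allI impI)
  fix x y
  assume xy: "tripartite_minus n p q x y"
  then have "p (p y) = y" "q (q y) = y"
    using assms by (auto simp: tripartite_minus_def tripartite_matching_def)
  with xy show "tripartite_minus n p q y x"
    by (auto simp: tripartite_minus_def)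
qed (auto simp: tripartite_minus_def)

lemma colorable_tripartite_minus: "colorable {0..<n} (tripartite_minus n p q) 3"
  unfolding colorable_def tripartite_minus_def by (intro exI[of _ "\<lambda>x. x mod 3"]) auto

lemma regular_tripartite_minus:
  assumes "tripartite_matching n p" "tripartite_matching n q"
    and "\<And>x. x < n \<Longrightarrow> card {u. u < n \<and> u mod 3 \<noteq> x mod 3} - card ({p x, q x} - {x}) = r"
  shows "regular {0..<n} (tripartite_minus n p q) r"
  unfolding regular_def
proof
  fix x
  assume "x \<in> {0..<n}"
  let ?C = "{u. u < n \<and> u mod 3 \<noteq> x mod 3}"
  have "{u\<in>{0..<n}. tripartite_minus n p q x u} = ?C - ({p x, q x} - {x})"
    using \<open>x \<in> {0..<n}\<close> by (auto simp: tripartite_minus_def)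
  moreover have "{p x, q x} - {x} \<subseteq> ?C"
    using assms(1,2) \<open>x \<in> {0..<n}\<close> by (auto simp: tripartite_matching_def)
  ultimately show "card {u\<in>{0..<n}. tripartite_minus n p q x u} = r"
    using assms(3) \<open>x \<in> {0..<n}\<close> by (simp add: card_Diff_subset)
qed

lemma card_other_residue_classes:
  fixes n i :: nat
  assumes "i < 3"
  shows "card {u. u < n \<and> u mod 3 \<noteq> i} = n - (n + 2 - i) div 3"
proof -
  have "{u. u < n \<and> u mod 3 \<noteq> i} = {..<n} - {u. u < n \<and> u mod 3 = i}"
    by auto
  also have "card \<dots> = n - card {u. u < n \<and> u mod 3 = i}"
    by (subst card_Diff_subset) auto
  finally show ?thesis
    using card_residue_class[OF assms, of n] by simp
qed

lemma card_other_residue_classes_mult: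
  assumes "i < 3"
  shows "card {u. u < 3 * m \<and> u mod 3 \<noteq> i} = 2 * m"
proof -
  have "3 * m + 2 - i = (2 - i) + m * 3"
    using assms by simp
  then have "(3 * m + 2 - i) div 3 = m"
    using assms by simp
  then show ?thesis
    using card_other_residue_classes[OF assms, of "3 * m"] by simp
qed

lemma card_other_residue_classes_mult_Suc:
  assumes "i < 3"
  shows "card {u. u < 3 * m + 1 \<and> u mod 3 \<noteq> i} = (if i = 0 then 2 * m else 2 * m + 1)"
proof -
  have "3 * m + 1 + 2 - i = (3 - i) + m * 3"
    using assms by simp
  then have "(3 * m + 1 + 2 - i) div 3 = (if i = 0 then m + 1 else m)"
    using assms by auto
  then show ?thesis
    using card_other_residue_classes[OF assms, of "3 * m + 1"] by simp
qed

definition swap_pairs :: "nat \<Rightarrow> nat" where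
  "swap_pairs x = (if even x then x + 1 else x - 1)"

text \<open>Matches \<open>3 j + 1\<close> with \<open>3 (j + 1) + 2\<close>, cyclically in \<open>j\<close>. As \<open>swap_pairs\<close> only joins
  consecutive numbers, the two matchings share no edge once \<open>n \<ge> 10\<close>.\<close>
definition shift_pairs :: "nat \<Rightarrow> nat \<Rightarrow> nat" where
  "shift_pairs n x =
    (if x mod 3 = 1 then (if x + 4 < n then x + 4 else 2)
     else if x mod 3 = 2 then (if 5 \<le> x then x - 4 else n - 3)
     else x)"

lemma tripartite_matching_id: "tripartite_matching n id"
  by (simp add: tripartite_matching_def)

lemma tripartite_matching_swap_pairs:
  assumes "even n"
  shows "tripartite_matching n swap_pairs"
  unfolding tripartite_matching_def
proof (intro allI impI)
  fix x
  assume "x < n"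
  show "swap_pairs x < n \<and> swap_pairs (swap_pairs x) = x \<and>
    (swap_pairs x = x \<or> swap_pairs x mod 3 \<noteq> x mod 3)"
  proof (cases "even x")
    case True
    have "x + 1 < n" "(x + 1) mod 3 \<noteq> x mod 3"
      using True assms \<open>x < n\<close> by presburger+
    then show ?thesis
      using True by (simp add: swap_pairs_def)
  next
    case False
    then obtain y where "x = y + 1" "even y"
      by (metis Suc_eq_plus1 even_Suc oddE)
    moreover have "(y + 1) mod 3 \<noteq> y mod 3"
      by presburger
    ultimately show ?thesis
      using \<open>x < n\<close> by (simp add: swap_pairs_def)
  qed
qed

lemma tripartite_matching_shift_pairs:
  assumes "n mod 3 = 1"
  shows "tripartite_matching n (shift_pairs n)"
  unfolding tripartite_matching_def
proof (intro allI impI)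
  fix x
  assume "x < n"
  consider "x mod 3 = 0" | "x mod 3 = 1" "x + 4 < n" | "x mod 3 = 1" "n \<le> x + 4"
    | "x mod 3 = 2" "5 \<le> x" | "x mod 3 = 2" "x < 5"
    by linarith
  then show "shift_pairs n x < n \<and> shift_pairs n (shift_pairs n x) = x \<and>
    (shift_pairs n x = x \<or> shift_pairs n x mod 3 \<noteq> x mod 3)"
  proof cases
    case 1
    then show ?thesis
      using \<open>x < n\<close> by (simp add: shift_pairs_def)
  next
    case 2
    moreover have "(x + 4) mod 3 = 2"
      using 2 by presburger
    ultimately show ?thesis
      by (simp add: shift_pairs_def)
  next
    case 3
    then have "n = x + 3"
      using assms \<open>x < n\<close> by presburger
    with 3 show ?thesis
      by (simp add: shift_pairs_def)
  next
    case 4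
    then obtain y where "x = y + 4"
      using le_Suc_ex[of 4 x] by auto
    moreover have "y mod 3 = 1"
      using 4 \<open>x = y + 4\<close> by presburger
    ultimately show ?thesis
      using 4 \<open>x < n\<close> by (simp add: shift_pairs_def)
  next
    case 5
    then have "x = 2"
      by presburger
    have "4 \<le> n"
      using assms \<open>x = 2\<close> \<open>x < n\<close> by presburger
    then obtain m where "n = m + 4"
      by (metis le_add_diff_inverse2)
    moreover have "(m + 1) mod 3 = 1"
      using assms \<open>n = m + 4\<close> by presburger
    ultimately show ?thesis
      using \<open>x = 2\<close> by (simp add: shift_pairs_def)
  qed
qed

lemma swap_pairs_neq: "swap_pairs x \<noteq> x"
  by (cases "even x") (auto simp: swap_pairs_def elim: oddE)

lemma shift_pairs_neq:
  assumes "n mod 3 = 1" "10 \<le> n" "x < n" "x mod 3 \<noteq> 0"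
  shows "shift_pairs n x \<noteq> x \<and> shift_pairs n x \<noteq> swap_pairs x"
proof -
  have swap: "x \<le> swap_pairs x + 1" "swap_pairs x \<le> x + 1"
    by (auto simp: swap_pairs_def)
  consider "x mod 3 = 1" "x + 4 < n" | "x mod 3 = 1" "n \<le> x + 4"
    | "x mod 3 = 2" "5 \<le> x" | "x mod 3 = 2" "x < 5"
    using assms(4) by linarith
  then show ?thesis
  proof cases
    case 1
    then show ?thesis
      using swap by (simp add: shift_pairs_def)
  next
    case 2
    moreover have "n = x + 3"
      using 2 assms(1,3) by presburger
    ultimately show ?thesis
      using swap assms(2) by (simp add: shift_pairs_def)
  next
    case 3
    then have "shift_pairs n x = x - 4"
      by (simp add: shift_pairs_def)
    then show ?thesis
      using swap 3 by arith
  next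
    case 4
    then have "x = 2"
      by presburger
    then have "shift_pairs n x = n - 3" "swap_pairs x = 3"
      by (simp_all add: shift_pairs_def swap_pairs_def)
    then show ?thesis
      using \<open>x = 2\<close> assms(2) by arith
  qed
qed

lemma rgchi_graph_complete_tripartite:
  assumes "1 \<le> m"
  shows "rgchi_graph {0..<3 * m} (tripartite_minus (3 * m) id id) (2 * m) 3 3"
proof (rule rgchi_graph_33I)
  show "regular {0..<3 * m} (tripartite_minus (3 * m) id id) (2 * m)"
    by (rule regular_tripartite_minus[OF tripartite_matching_id tripartite_matching_id])
      (simp add: card_other_residue_classes_mult)
  show "tripartite_minus (3 * m) id id 0 1" "tripartite_minus (3 * m) id id 1 2"
    "tripartite_minus (3 * m) id id 2 0"
    using assms by (auto simp: tripartite_minus_def)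
qed (simp_all add: simple_graph_tripartite_minus tripartite_matching_id colorable_tripartite_minus)

lemma rgchi_graph_tripartite_minus_swap_pairs:
  assumes "1 \<le> k"
  shows "rgchi_graph {0..<6 * k} (tripartite_minus (6 * k) swap_pairs id) (4 * k - 1) 3 3"
proof (rule rgchi_graph_33I)
  have matchings: "tripartite_matching (6 * k) swap_pairs" "tripartite_matching (6 * k) id"
    by (simp_all add: tripartite_matching_swap_pairs tripartite_matching_id)
  have "{swap_pairs x, id x} - {x} = {swap_pairs x}" for x
    using swap_pairs_neq by auto
  then show "regular {0..<6 * k} (tripartite_minus (6 * k) swap_pairs id) (4 * k - 1)"
    using card_other_residue_classes_mult[of _ "2 * k"]
    by (intro regular_tripartite_minus[OF matchings]) simp
  show "simple_graph {0..<6 * k} (tripartite_minus (6 * k) swap_pairs id)"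
    by (rule simple_graph_tripartite_minus[OF matchings])
  show "tripartite_minus (6 * k) swap_pairs id 0 2" "tripartite_minus (6 * k) swap_pairs id 2 4"
    "tripartite_minus (6 * k) swap_pairs id 4 0"
    using assms by (auto simp: tripartite_minus_def swap_pairs_def)
qed (rule colorable_tripartite_minus)

lemma rgchi_graph_tripartite_minus_swap_shift_pairs:
  assumes "odd N" "3 \<le> N"
  shows "rgchi_graph {0..<3 * N + 1}
    (tripartite_minus (3 * N + 1) swap_pairs (shift_pairs (3 * N + 1))) (2 * N - 1) 3 3"
proof (rule rgchi_graph_33I)
  let ?n = "3 * N + 1"
  have matchings: "tripartite_matching ?n swap_pairs" "tripartite_matching ?n (shift_pairs ?n)"
    using assms(1) by (simp_all add: tripartite_matching_swap_pairs tripartite_matching_shift_pairs)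
  have "card {u. u < ?n \<and> u mod 3 \<noteq> x mod 3} - card ({swap_pairs x, shift_pairs ?n x} - {x})
    = 2 * N - 1" if "x < ?n" for x
  proof (cases "x mod 3 = 0")
    case True
    then have "{swap_pairs x, shift_pairs ?n x} - {x} = {swap_pairs x}"
      using swap_pairs_neq by (auto simp: shift_pairs_def)
    then show ?thesis
      using True card_other_residue_classes_mult_Suc[of "x mod 3" N] by simp
  next
    case False
    then have "{swap_pairs x, shift_pairs ?n x} - {x} = {swap_pairs x, shift_pairs ?n x}"
      and "card {swap_pairs x, shift_pairs ?n x} = 2"
      using swap_pairs_neq shift_pairs_neq[of ?n x] that assms(2) by auto
    then show ?thesis
      using False card_other_residue_classes_mult_Suc[of "x mod 3" N] by simp
  qed
  then show "regular {0..<?n} (tripartite_minus ?n swap_pairs (shift_pairs ?n)) (2 * N - 1)"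
    by (intro regular_tripartite_minus[OF matchings])
  show "simple_graph {0..<?n} (tripartite_minus ?n swap_pairs (shift_pairs ?n))"
    by (rule simple_graph_tripartite_minus[OF matchings])
  show "tripartite_minus ?n swap_pairs (shift_pairs ?n) 0 2"
    "tripartite_minus ?n swap_pairs (shift_pairs ?n) 2 4"
    "tripartite_minus ?n swap_pairs (shift_pairs ?n) 4 0"
    using assms by (auto simp: tripartite_minus_def swap_pairs_def shift_pairs_def)
qed (rule colorable_tripartite_minus)

lemma nat_ge_2_cases_mod_4:
  fixes r :: nat
  assumes "2 \<le> r"
  obtains (even) m where "r = 2 * m" "1 \<le> m"
  | (three_mod_4) k where "r = 4 * k - 1" "1 \<le> k"
  | (one_mod_4) N where "r = 2 * N - 1" "odd N" "3 \<le> N"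
proof (cases "even r")
  case True
  then show ?thesis
    using even[of "r div 2"] assms by simp
next
  case False
  then have "r mod 4 = 3 \<or> r mod 4 = 1"
    by presburger
  then show ?thesis
  proof
    assume "r mod 4 = 3"
    then have "r = 4 * ((r + 1) div 4) - 1" "1 \<le> (r + 1) div 4"
      by presburger+
    then show ?thesis
      by (rule three_mod_4)
  next
    assume "r mod 4 = 1"
    then have "r = 2 * ((r + 1) div 2) - 1" "odd ((r + 1) div 2)" "3 \<le> (r + 1) div 2"
      using assms by presburger+
    then show ?thesis
      by (rule one_mod_4)
  qed
qed

lemma rgchi_graph_33_exists:
  assumes "2 \<le> r"
  shows "\<exists>V E. rgchi_graph V E r 3 3 \<and> card V = cage_bound_33 r"
  using assms
proof (cases rule: nat_ge_2_cases_mod_4)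
  case (even m)
  then show ?thesis
    using rgchi_graph_complete_tripartite[of m] by (fastforce simp: cage_bound_33_def)
next
  case (three_mod_4 k)
  then show ?thesis
    using rgchi_graph_tripartite_minus_swap_pairs[of k] by (fastforce simp: cage_bound_33_def)
next
  case (one_mod_4 N)
  then show ?thesis
    using rgchi_graph_tripartite_minus_swap_shift_pairs[of N] by (fastforce simp: cage_bound_33_def)
qed

theorem theorem3p2:
  fixes r :: nat
  assumes "r \<ge> 2"
  shows "cage_order r 3 3 =
    (if even r then r + r div 2
     else if even ((r + 1) div 2) then r + (r + 1) div 2 + 1
     else r + (r + 1) div 2 + 2)"
proof -
  have "cage_order r 3 3 = cage_bound_33 r"
    unfolding cage_order_def
  proof (rule Least_equality)
    show "\<exists>V E. rgchi_graph V E r 3 3 \<and> card V = cage_bound_33 r"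
      using rgchi_graph_33_exists[OF assms] .
    show "cage_bound_33 r \<le> n" if "\<exists>V E. rgchi_graph V E r 3 3 \<and> card V = n" for n
      using that rgchi_graph_33_card_ge[OF _ assms] by blast
  qed
  then show ?thesis
    by (simp add: cage_bound_33_def)
qed

end
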